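(* Let $G$ be a finite simple graph with maximum degree $\Delta$. For every edge $e=uv$ of $G$, $$|F(e)|\le \Delta^2-1-\tfrac12|C_e^{\Delta}|-|T_1(e)|-\tfrac12|T_2(e)|-\tfrac12|T_6(e)|.$$ Moreover, if equality holds, then every vertex in $N(u)\cup N(v)$ has degree $\Delta$.
   Context: $N(w)$ is the open neighborhood of a vertex $w$. Two distinct edges $e,f$ are $1$-neighbors if they share an endvertex, and $2$-neighbors if they share no endvertex but some edge of $G$ shares an endvertex with each of them. $N(e)$ is the set of $1$-neighbors of $e$. $C_e^{\Delta}$ denotes the set of $1$-neighbors of $e$ that lie on a common $3$-cycle with $e$. For a $2$-neighbor $f=xy$ of $e=uv$, let $c(e,f)$ be the number of edges of $G$ joining a vertex of $\{u,v\}$ to a vertex of $\{x,y\}$ (so $1\le c(e,f)\le 4$). The type of $f$ (relative to $e$) is: Type 1 if $c(e,f)=4$; Type 2 if $c(e,f)=3$; Type 3 if $c(e,f)=2$ and some vertex of $f$ is adjacent to both $u$ and $v$; Type 4 if $c(e,f)=2$ and the two joining edges form a matching; Type 5 if $c(e,f)=2$ and some vertex of $e$ is adjacent to both $x$ and $y$; Type 6 if $c(e,f)=1$. $T_i(e)$ is the set of $2$-neighbors of $e$ of Type $i$. $F(e)=N(e)\cup T_1(e)\cup T_2(e)\cup T_3(e)\cup T_4(e)\cup T_5(e)$. *)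

theory Defs
  imports Complex_Main
begin

definition simple_graph :: "'a set \<Rightarrow> ('a \<Rightarrow> 'a \<Rightarrow> bool) \<Rightarrow> bool" where
  "simple_graph V E \<longleftrightarrow> finite V \<and> (\<forall>x y. E x y \<longrightarrow> x \<in> V \<and> y \<in> V)
     \<and> (\<forall>x y. E x y \<longrightarrow> E y x) \<and> (\<forall>x. \<not> E x x)"

definition edges :: "('a \<Rightarrow> 'a \<Rightarrow> bool) \<Rightarrow> 'a set set" where
  "edges E = {{x, y} | x y. E x y}"

definition nbhd :: "('a \<Rightarrow> 'a \<Rightarrow> bool) \<Rightarrow> 'a \<Rightarrow> 'a set" where
  "nbhd E w = {z. E w z}"

definition degree :: "('a \<Rightarrow> 'a \<Rightarrow> bool) \<Rightarrow> 'a \<Rightarrow> nat" where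
  "degree E w = card (nbhd E w)"

definition max_degree :: "'a set \<Rightarrow> ('a \<Rightarrow> 'a \<Rightarrow> bool) \<Rightarrow> nat" where
  "max_degree V E = Max (degree E ` V)"

definition one_nbrs :: "('a \<Rightarrow> 'a \<Rightarrow> bool) \<Rightarrow> 'a set \<Rightarrow> 'a set set" where
  "one_nbrs E e = {f \<in> edges E. f \<noteq> e \<and> f \<inter> e \<noteq> {}}"

definition two_nbrs :: "('a \<Rightarrow> 'a \<Rightarrow> bool) \<Rightarrow> 'a set \<Rightarrow> 'a set set" where
  "two_nbrs E e = {f \<in> edges E. f \<noteq> e \<and> f \<inter> e = {} \<and>
      (\<exists>g \<in> edges E. g \<inter> e \<noteq> {} \<and> g \<inter> f \<noteq> {})}"

definition tri_nbrs :: "('a \<Rightarrow> 'a \<Rightarrow> bool) \<Rightarrow> 'a set \<Rightarrow> 'a set set" where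
  "tri_nbrs E e = {f \<in> one_nbrs E e. \<exists>a b c. e = {a, b} \<and> f = {b, c}
      \<and> a \<noteq> c \<and> E a c}"

definition joins :: "('a \<Rightarrow> 'a \<Rightarrow> bool) \<Rightarrow> 'a set \<Rightarrow> 'a set \<Rightarrow> ('a \<times> 'a) set" where
  "joins E e f = {(a, x). a \<in> e \<and> x \<in> f \<and> E a x}"

definition cnum :: "('a \<Rightarrow> 'a \<Rightarrow> bool) \<Rightarrow> 'a set \<Rightarrow> 'a set \<Rightarrow> nat" where
  "cnum E e f = card (joins E e f)"

definition T1 :: "('a \<Rightarrow> 'a \<Rightarrow> bool) \<Rightarrow> 'a set \<Rightarrow> 'a set set" where
  "T1 E e = {f \<in> two_nbrs E e. cnum E e f = 4}"

definition T2 :: "('a \<Rightarrow> 'a \<Rightarrow> bool) \<Rightarrow> 'a set \<Rightarrow> 'a set set" where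
  "T2 E e = {f \<in> two_nbrs E e. cnum E e f = 3}"

definition T3 :: "('a \<Rightarrow> 'a \<Rightarrow> bool) \<Rightarrow> 'a set \<Rightarrow> 'a set set" where
  "T3 E e = {f \<in> two_nbrs E e. cnum E e f = 2 \<and> (\<exists>x \<in> f. \<forall>a \<in> e. E x a)}"

definition T4 :: "('a \<Rightarrow> 'a \<Rightarrow> bool) \<Rightarrow> 'a set \<Rightarrow> 'a set set" where
  "T4 E e = {f \<in> two_nbrs E e. cnum E e f = 2 \<and>
      (\<forall>(a, x) \<in> joins E e f. \<forall>(b, y) \<in> joins E e f. (a, x) \<noteq> (b, y) \<longrightarrow> a \<noteq> b \<and> x \<noteq> y)}"

definition T5 :: "('a \<Rightarrow> 'a \<Rightarrow> bool) \<Rightarrow> 'a set \<Rightarrow> 'a set set" where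
  "T5 E e = {f \<in> two_nbrs E e. cnum E e f = 2 \<and> (\<exists>a \<in> e. \<forall>x \<in> f. E a x)}"

definition T6 :: "('a \<Rightarrow> 'a \<Rightarrow> bool) \<Rightarrow> 'a set \<Rightarrow> 'a set set" where
  "T6 E e = {f \<in> two_nbrs E e. cnum E e f = 1}"

definition Fset :: "('a \<Rightarrow> 'a \<Rightarrow> bool) \<Rightarrow> 'a set \<Rightarrow> 'a set set" where
  "Fset E e = one_nbrs E e \<union> T1 E e \<union> T2 E e \<union> T3 E e \<union> T4 E e \<union> T5 E e"

end

theory Submission
  imports Defs
begin

text \<open>
  Count the edges leaving \<open>e = uv\<close> as pairs \<open>(a, x)\<close> with \<open>a \<in> e\<close>, \<open>x \<notin> e\<close> and \<open>ax \<in> E\<close>: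
  there are \<open>(d(u) - 1) + (d(v) - 1) \<le> 2(\<Delta> - 1)\<close> of them and they cover \<open>N(e)\<close>.
  Extending such a pair by a neighbour \<open>y \<notin> e\<close> of \<open>x\<close> counts every 2-neighbour
  \<open>f = xy\<close> exactly \<open>c(e, f)\<close> times, and when \<open>x\<close> is a common neighbour of \<open>u\<close> and \<open>v\<close>
  (the case of the pairs covering \<open>C\<^sub>e\<^sup>\<Delta>\<close>) only \<open>d(x) - 2\<close> extensions exist. Hence
  \<open>|C\<^sub>e\<^sup>\<Delta>| + 4|T\<^sub>1| + 3|T\<^sub>2| + 2|T\<^sub>3 \<union> T\<^sub>4 \<union> T\<^sub>5| + |T\<^sub>6| \<le> \<Sum> (d(x) - 1) \<le> 2(\<Delta> - 1)\<^sup>2\<close>,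
  and adding \<open>2|N(e)| + 2|T\<^sub>1| + 2|T\<^sub>2| + 2|T\<^sub>3 \<union> T\<^sub>4 \<union> T\<^sub>5| \<ge> 2|F(e)|\<close> gives twice the claimed
  inequality. Equality forces \<open>d(u) = d(v) = \<Delta>\<close> and \<open>d(x) = \<Delta>\<close> for every pair.
\<close>

lemma sum_weighted_level_counts_le:
  fixes g :: "'b \<Rightarrow> nat"
  assumes "finite A" and "finite K"
  shows "(\<Sum>k\<in>K. k * card {x\<in>A. g x = k}) \<le> sum g A"
proof -
  have "(\<Sum>k\<in>K. k * card {x\<in>A. g x = k}) = (\<Sum>k\<in>K. \<Sum>x\<in>{x \<in> {x\<in>A. g x \<in> K}. g x = k}. g x)"
  proof (rule sum.cong)
    fix k assume "k \<in> K"
    then have "{x \<in> {x\<in>A. g x \<in> K}. g x = k} = {x\<in>A. g x = k}" by auto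
    then show "k * card {x\<in>A. g x = k} = (\<Sum>x\<in>{x \<in> {x\<in>A. g x \<in> K}. g x = k}. g x)" by simp
  qed simp
  also have "\<dots> = sum g {x\<in>A. g x \<in> K}"
    by (rule sum.group) (use assms in auto)
  also have "\<dots> \<le> sum g A"
    using \<open>finite A\<close> by (intro sum_mono2) auto
  finally show ?thesis .
qed

lemma sum_eq_card_mult_bound_imp_eq:
  fixes f :: "'b \<Rightarrow> nat"
  assumes "finite A" and "\<forall>x\<in>A. f x \<le> c" and "sum f A = card A * c"
  shows "\<forall>x\<in>A. f x = c"
proof (rule ccontr)
  assume "\<not> (\<forall>x\<in>A. f x = c)"
  then have "sum f A < (\<Sum>x\<in>A. c)"
    using assms(1,2) by (intro sum_strict_mono_ex1) (auto simp: order_less_le)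
  then show False using assms(3) by (simp add: mult.commute)
qed

definition out_pairs :: "('a \<Rightarrow> 'a \<Rightarrow> bool) \<Rightarrow> 'a set \<Rightarrow> ('a \<times> 'a) set" where
  "out_pairs E e = {(a, x). a \<in> e \<and> E a x \<and> x \<notin> e}"

definition two_nbrs_with :: "('a \<Rightarrow> 'a \<Rightarrow> bool) \<Rightarrow> 'a set \<Rightarrow> nat \<Rightarrow> 'a set set" where
  "two_nbrs_with E e k = {f \<in> two_nbrs E e. cnum E e f = k}"

lemma T1_eq: "T1 E e = two_nbrs_with E e 4"
  and T2_eq: "T2 E e = two_nbrs_with E e 3"
  and T6_eq: "T6 E e = two_nbrs_with E e 1"
  and T3_T4_T5_subset: "T3 E e \<union> T4 E e \<union> T5 E e \<subseteq> two_nbrs_with E e 2"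
  unfolding T1_def T2_def T3_def T4_def T5_def T6_def two_nbrs_with_def by auto

locale finite_simple_graph =
  fixes V :: "'a set" and E :: "'a \<Rightarrow> 'a \<Rightarrow> bool"
  assumes simple: "simple_graph V E"
begin

lemma finite_V: "finite V"
  and adj_in_V: "E x y \<Longrightarrow> x \<in> V \<and> y \<in> V"
  and adj_sym: "E x y \<Longrightarrow> E y x"
  and adj_irrefl: "\<not> E x x"
  using simple unfolding simple_graph_def by blast+

lemma finite_nbhd: "finite (nbhd E w)"
  using finite_V adj_in_V by (auto intro: finite_subset[of _ V] simp: nbhd_def)

lemma degree_le_max_degree: "degree E w \<le> max_degree V E"
proof (cases "w \<in> V")
  case True
  then show ?thesis using finite_V unfolding max_degree_def by simp
next
  case False
  then have "nbhd E w = {}" using adj_in_V unfolding nbhd_def by blast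
  then show ?thesis unfolding degree_def by simp
qed

lemma degree_pos: "E w x \<Longrightarrow> 0 < degree E w"
  unfolding degree_def using finite_nbhd by (auto simp: card_gt_0_iff nbhd_def)

lemma finite_edges: "finite (edges E)"
proof -
  have "edges E \<subseteq> Pow V" using adj_in_V unfolding edges_def by blast
  then show ?thesis using finite_V by (meson finite_Pow_iff finite_subset)
qed

lemma finite_out_pairs: "finite e \<Longrightarrow> finite (out_pairs E e)"
  by (rule finite_subset[of _ "e \<times> V"]) (auto simp: out_pairs_def adj_in_V finite_V)

lemma card_out_pairs:
  assumes "E u v"
  shows "card (out_pairs E {u, v}) = (degree E u - 1) + (degree E v - 1)"
proof -
  have "u \<noteq> v" using assms adj_irrefl by metis
  have "v \<in> nbhd E u" "u \<in> nbhd E v"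
    using assms adj_sym unfolding nbhd_def by auto
  have "out_pairs E {u, v} = {u} \<times> (nbhd E u - {v}) \<union> {v} \<times> (nbhd E v - {u})"
    unfolding out_pairs_def nbhd_def using adj_irrefl by auto
  also have "card \<dots> = card (nbhd E u - {v}) + card (nbhd E v - {u})"
    using \<open>u \<noteq> v\<close> finite_nbhd
    by (subst card_Un_disjoint) (auto simp: card_cartesian_product_singleton)
  also have "\<dots> = (degree E u - 1) + (degree E v - 1)"
    unfolding degree_def using \<open>v \<in> nbhd E u\<close> \<open>u \<in> nbhd E v\<close> finite_nbhd by simp
  finally show ?thesis .
qed

lemma one_nbrs_subset_out_pairs:
  assumes "E u v"
  shows "one_nbrs E {u, v} \<subseteq> (\<lambda>(a, x). {a, x}) ` out_pairs E {u, v}"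
proof
  fix f assume "f \<in> one_nbrs E {u, v}"
  then obtain x y where f: "f = {x, y}" "E x y" "f \<noteq> {u, v}" "f \<inter> {u, v} \<noteq> {}"
    unfolding one_nbrs_def edges_def by auto
  then have "(x, y) \<in> out_pairs E {u, v} \<or> (y, x) \<in> out_pairs E {u, v}"
    using adj_sym adj_irrefl unfolding out_pairs_def by (auto simp: doubleton_eq_iff)
  then show "f \<in> (\<lambda>(a, x). {a, x}) ` out_pairs E {u, v}"
    using f(1) by (auto simp: insert_commute intro: rev_image_eqI)
qed

lemma tri_nbrs_subset_out_pairs:
  assumes "E u v"
  shows "tri_nbrs E {u, v} \<subseteq> (\<lambda>(a, x). {a, x}) ` {(a, x) \<in> out_pairs E {u, v}. E u x \<and> E v x}"
proof
  fix f assume "f \<in> tri_nbrs E {u, v}"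
  then obtain a b c where abc: "{u, v} = {a, b}" "f = {b, c}" "a \<noteq> c" "E a c" "f \<in> edges E"
    unfolding tri_nbrs_def one_nbrs_def by blast
  then have "E b c" using adj_sym unfolding edges_def by (auto simp: doubleton_eq_iff)
  then have "(b, c) \<in> {(a, x) \<in> out_pairs E {u, v}. E u x \<and> E v x}"
    using abc assms adj_sym adj_irrefl unfolding out_pairs_def by (auto simp: doubleton_eq_iff)
  then show "f \<in> (\<lambda>(a, x). {a, x}) ` {(a, x) \<in> out_pairs E {u, v}. E u x \<and> E v x}"
    using abc(2) by (auto intro: rev_image_eqI)
qed

lemma two_nbrs_joins_bij:
  "bij_betw (\<lambda>((a, x), y). ({x, y}, (a, x)))
     (SIGMA (a, x):out_pairs E e. nbhd E x - e) (SIGMA f:two_nbrs E e. joins E e f)"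
proof (rule bij_betw_imageI)
  show "inj_on (\<lambda>((a, x), y). ({x, y}, (a, x))) (SIGMA (a, x):out_pairs E e. nbhd E x - e)"
    by (rule inj_onI) (auto simp: doubleton_eq_iff)
  show "(\<lambda>((a, x), y). ({x, y}, (a, x))) ` (SIGMA (a, x):out_pairs E e. nbhd E x - e)
      = (SIGMA f:two_nbrs E e. joins E e f)"
  proof (intro equalityI subsetI)
    fix q assume "q \<in> (\<lambda>((a, x), y). ({x, y}, (a, x))) ` (SIGMA (a, x):out_pairs E e. nbhd E x - e)"
    then obtain a x y where q: "q = ({x, y}, (a, x))" "a \<in> e" "E a x" "x \<notin> e" "E x y" "y \<notin> e"
      unfolding out_pairs_def nbhd_def by auto
    have "{a, x} \<in> edges E" "{x, y} \<in> edges E"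
      using q unfolding edges_def by auto
    then have "{x, y} \<in> two_nbrs E e"
      using q unfolding two_nbrs_def by (auto intro!: bexI[of _ "{a, x}"])
    then show "q \<in> (SIGMA f:two_nbrs E e. joins E e f)"
      using q unfolding joins_def by auto
  next
    fix q assume "q \<in> (SIGMA f:two_nbrs E e. joins E e f)"
    then obtain f a x where q: "q = (f, (a, x))" "f \<in> two_nbrs E e" "a \<in> e" "x \<in> f" "E a x"
      unfolding joins_def by auto
    then obtain y where "f = {x, y}" "E x y" "f \<inter> e = {}"
      using adj_sym unfolding two_nbrs_def edges_def by (auto simp: doubleton_eq_iff)
    then show "q \<in> (\<lambda>((a, x), y). ({x, y}, (a, x))) ` (SIGMA (a, x):out_pairs E e. nbhd E x - e)"
      using q unfolding out_pairs_def nbhd_def by (auto intro!: rev_image_eqI[of "((a, x), y)"])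
  qed
qed

lemma sum_out_pairs_eq_sum_cnum:
  assumes "finite e"
  shows "(\<Sum>(a, x)\<in>out_pairs E e. card (nbhd E x - e)) = (\<Sum>f\<in>two_nbrs E e. cnum E e f)"
proof -
  have "finite (joins E e f)" if "f \<in> two_nbrs E e" for f
  proof -
    have "finite f" using that unfolding two_nbrs_def edges_def by auto
    then show ?thesis
      using assms by (auto intro: finite_subset[of _ "e \<times> f"] simp: joins_def)
  qed
  moreover have "finite (two_nbrs E e)"
    using finite_edges unfolding two_nbrs_def by auto
  ultimately have "card (SIGMA f:two_nbrs E e. joins E e f) = (\<Sum>f\<in>two_nbrs E e. cnum E e f)"
    unfolding cnum_def by simp
  moreover have "card (SIGMA (a, x):out_pairs E e. nbhd E x - e)
      = (\<Sum>(a, x)\<in>out_pairs E e. card (nbhd E x - e))"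
    using finite_out_pairs[OF assms] finite_nbhd by (subst card_SigmaI) (auto simp: case_prod_beta)
  ultimately show ?thesis
    using bij_betw_same_card[OF two_nbrs_joins_bij] by simp
qed

lemma card_nbhd_outside_edge_le:
  assumes "E u v" and "(a, x) \<in> out_pairs E {u, v}"
  shows "card (nbhd E x - {u, v}) + (if E u x \<and> E v x then 1 else 0) \<le> degree E x - 1"
proof -
  have "a \<in> nbhd E x \<inter> {u, v}"
    using assms(2) adj_sym unfolding out_pairs_def nbhd_def by auto
  then have "1 \<le> card (nbhd E x \<inter> {u, v})"
    using finite_nbhd by (auto simp: Suc_le_eq card_gt_0_iff)
  moreover have "card (nbhd E x \<inter> {u, v}) = 2" if "E u x \<and> E v x"
  proof -
    have "nbhd E x \<inter> {u, v} = {u, v}" using that adj_sym unfolding nbhd_def by auto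
    then show ?thesis using assms(1) adj_irrefl by (metis card_2_iff)
  qed
  moreover have "degree E x = card (nbhd E x \<inter> {u, v}) + card (nbhd E x - {u, v})"
    unfolding degree_def using finite_nbhd by (rule card_Int_Diff)
  ultimately show ?thesis by (cases "E u x \<and> E v x") auto
qed

lemma finite_two_nbrs_with: "finite (two_nbrs_with E e k)"
  using finite_edges unfolding two_nbrs_with_def two_nbrs_def by auto

lemma card_Fset_le:
  "card (Fset E e) \<le>
     card (one_nbrs E e) + card (T1 E e) + card (T2 E e) + card (two_nbrs_with E e 2)"
proof -
  let ?U = "one_nbrs E e \<union> T1 E e \<union> T2 E e \<union> two_nbrs_with E e 2"
  have "finite ?U"
    using finite_edges finite_two_nbrs_with unfolding one_nbrs_def T1_eq T2_eq by auto
  moreover have "Fset E e \<subseteq> ?U"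
    using T3_T4_T5_subset[of E e] unfolding Fset_def by auto
  ultimately have "card (Fset E e) \<le> card ?U" by (rule card_mono)
  also have "\<dots> \<le> card (one_nbrs E e) + card (T1 E e) + card (T2 E e) + card (two_nbrs_with E e 2)"
    by (meson add_le_mono card_Un_le le_refl order_trans)
  finally show ?thesis .
qed

lemma weighted_neighbour_count_le:
  assumes "E u v"
  defines "e \<equiv> {u, v}" and "P \<equiv> out_pairs E {u, v}"
  shows "2 * card (Fset E e) + card (tri_nbrs E e) + 2 * card (T1 E e) + card (T2 E e) + card (T6 E e)
           \<le> 2 * card P + (\<Sum>(a, x)\<in>P. degree E x - 1)"
proof -
  define Q where "Q = {(a, x) \<in> P. E u x \<and> E v x}"
  have "finite P" unfolding P_def by (simp add: finite_out_pairs)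
  have "finite Q" using \<open>finite P\<close> unfolding Q_def by (auto intro: finite_subset)
  have one: "card (one_nbrs E e) \<le> card P"
    using \<open>finite P\<close> one_nbrs_subset_out_pairs[OF assms(1)]
    unfolding e_def P_def by (rule surj_card_le)
  have tri: "card (tri_nbrs E e) \<le> card Q"
    using \<open>finite Q\<close> tri_nbrs_subset_out_pairs[OF assms(1)]
    unfolding e_def Q_def P_def by (rule surj_card_le)
  have "4 * card (T1 E e) + 3 * card (T2 E e) + 2 * card (two_nbrs_with E e 2) + card (T6 E e)
      = (\<Sum>k\<in>{1, 2, 3, 4}. k * card {f \<in> two_nbrs E e. cnum E e f = k})"
    unfolding T1_eq T2_eq T6_eq two_nbrs_with_def by simp
  also have "\<dots> \<le> (\<Sum>f\<in>two_nbrs E e. cnum E e f)"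
    using finite_edges unfolding two_nbrs_def by (intro sum_weighted_level_counts_le) auto
  also have "\<dots> = (\<Sum>(a, x)\<in>P. card (nbhd E x - e))"
    unfolding P_def e_def by (simp add: sum_out_pairs_eq_sum_cnum)
  finally have two: "4 * card (T1 E e) + 3 * card (T2 E e) + 2 * card (two_nbrs_with E e 2)
      + card (T6 E e) \<le> (\<Sum>(a, x)\<in>P. card (nbhd E x - e))" .
  have "Q = {p \<in> P. E u (snd p) \<and> E v (snd p)}" unfolding Q_def by auto
  then have "card Q = (\<Sum>(a, x)\<in>P. if E u x \<and> E v x then 1 else 0)"
    by (simp add: sum.inter_filter[OF \<open>finite P\<close>, symmetric] case_prod_beta)
  then have "(\<Sum>(a, x)\<in>P. card (nbhd E x - e)) + card Q
      = (\<Sum>(a, x)\<in>P. card (nbhd E x - e) + (if E u x \<and> E v x then 1 else 0))"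
    by (simp add: sum.distrib case_prod_beta)
  also have "\<dots> \<le> (\<Sum>(a, x)\<in>P. degree E x - 1)"
    using card_nbhd_outside_edge_le[OF assms(1)] unfolding P_def e_def
    by (intro sum_mono) auto
  finally have "(\<Sum>(a, x)\<in>P. card (nbhd E x - e)) + card Q \<le> (\<Sum>(a, x)\<in>P. degree E x - 1)" .
  with card_Fset_le[of e] one tri two show ?thesis by linarith
qed

lemma sum_out_pairs_degree_le:
  "(\<Sum>(a, x)\<in>out_pairs E e. degree E x - 1) \<le> card (out_pairs E e) * (max_degree V E - 1)"
proof -
  have "(\<Sum>(a, x)\<in>out_pairs E e. degree E x - 1) \<le> (\<Sum>p\<in>out_pairs E e. max_degree V E - 1)"
    by (rule sum_mono) (auto simp: diff_le_mono degree_le_max_degree)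
  then show ?thesis by (simp add: mult.commute)
qed

lemma degree_eq_max_if_sum_out_pairs_tight:
  assumes "finite e"
    and "(\<Sum>(a, x)\<in>out_pairs E e. degree E x - 1) = card (out_pairs E e) * (max_degree V E - 1)"
    and "(a, x) \<in> out_pairs E e"
  shows "degree E x = max_degree V E"
proof -
  have "\<forall>(a, x)\<in>out_pairs E e. degree E x - 1 = max_degree V E - 1"
    using sum_eq_card_mult_bound_imp_eq[OF finite_out_pairs[OF assms(1)] _ assms(2)[unfolded case_prod_beta]]
      degree_le_max_degree by (auto simp: case_prod_beta diff_le_mono)
  moreover have "0 < degree E x"
    using assms(3) adj_sym degree_pos unfolding out_pairs_def by blast
  ultimately show ?thesis
    using assms(3) degree_le_max_degree[of x] by fastforce
qed

lemma out_pairs_degree_sum: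
  assumes "E u v"
  defines "\<Delta> \<equiv> max_degree V E" and "P \<equiv> out_pairs E {u, v}"
  shows "2 * card P + (\<Sum>(a, x)\<in>P. degree E x - 1) + 2 \<le> 2 * \<Delta>\<^sup>2"
    and "2 * card P + (\<Sum>(a, x)\<in>P. degree E x - 1) + 2 = 2 * \<Delta>\<^sup>2
           \<Longrightarrow> \<forall>w \<in> nbhd E u \<union> nbhd E v. degree E w = \<Delta>"
proof -
  let ?S = "\<Sum>(a, x)\<in>P. degree E x - 1"
  define D where "D = \<Delta> - 1"
  have deg_le: "degree E w \<le> \<Delta>" for w
    unfolding \<Delta>_def by (rule degree_le_max_degree)
  have "0 < degree E u" "0 < degree E v"
    using assms(1) adj_sym by (auto intro: degree_pos)
  then have D: "\<Delta> = D + 1"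
    using deg_le[of u] unfolding D_def by linarith
  have card_P: "card P = (degree E u - 1) + (degree E v - 1)"
    unfolding P_def using assms(1) by (rule card_out_pairs)
  then have "card P \<le> 2 * D"
    using deg_le[of u] deg_le[of v] D by linarith
  have "?S \<le> card P * D"
    unfolding P_def D_def \<Delta>_def by (rule sum_out_pairs_degree_le)
  have bound: "card P * (D + 2) \<le> 2 * D * (D + 2)"
    using \<open>card P \<le> 2 * D\<close> by (rule mult_right_mono) simp
  have "2 * D * (D + 2) + 2 = 2 * \<Delta>\<^sup>2"
    unfolding D by (simp add: power2_eq_square algebra_simps)
  with \<open>?S \<le> card P * D\<close> bound show "2 * card P + ?S + 2 \<le> 2 * \<Delta>\<^sup>2"
    by (simp add: algebra_simps)
  assume "2 * card P + ?S + 2 = 2 * \<Delta>\<^sup>2"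
  with \<open>?S \<le> card P * D\<close> bound \<open>2 * D * (D + 2) + 2 = 2 * \<Delta>\<^sup>2\<close>
  have P_eq: "card P * (D + 2) = 2 * D * (D + 2)" and S_eq: "?S = card P * D"
    by (simp_all add: algebra_simps)
  from P_eq have "card P = 2 * D" by (simp only: mult_right_cancel)
  then have "degree E u = \<Delta>" "degree E v = \<Delta>"
    using card_P deg_le[of u] deg_le[of v] D \<open>0 < degree E u\<close> \<open>0 < degree E v\<close> by simp_all
  moreover have "degree E x = \<Delta>" if "(a, x) \<in> P" for a x
    using degree_eq_max_if_sum_out_pairs_tight[OF _ S_eq[unfolded P_def D_def \<Delta>_def]] that
    unfolding P_def \<Delta>_def by blast
  ultimately show "\<forall>w \<in> nbhd E u \<union> nbhd E v. degree E w = \<Delta>"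
    unfolding P_def out_pairs_def nbhd_def by auto
qed

lemma weighted_neighbour_count_bound:
  assumes "E u v"
  defines "\<Delta> \<equiv> max_degree V E"
    and "K \<equiv> 2 * card (Fset E {u, v}) + card (tri_nbrs E {u, v}) + 2 * card (T1 E {u, v})
      + card (T2 E {u, v}) + card (T6 E {u, v})"
  shows "K + 2 \<le> 2 * \<Delta>\<^sup>2"
    and "K + 2 = 2 * \<Delta>\<^sup>2 \<Longrightarrow> \<forall>w \<in> nbhd E u \<union> nbhd E v. degree E w = \<Delta>"
proof -
  define S where "S = 2 * card (out_pairs E {u, v}) + (\<Sum>(a, x)\<in>out_pairs E {u, v}. degree E x - 1)"
  have "K \<le> S" unfolding K_def S_def using weighted_neighbour_count_le[OF assms(1)] by simp
  moreover have "S + 2 \<le> 2 * \<Delta>\<^sup>2"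
    unfolding S_def \<Delta>_def by (rule out_pairs_degree_sum(1)[OF assms(1)])
  ultimately show "K + 2 \<le> 2 * \<Delta>\<^sup>2" by linarith
  assume "K + 2 = 2 * \<Delta>\<^sup>2"
  with \<open>K \<le> S\<close> \<open>S + 2 \<le> 2 * \<Delta>\<^sup>2\<close> have "S + 2 = 2 * \<Delta>\<^sup>2" by linarith
  then show "\<forall>w \<in> nbhd E u \<union> nbhd E v. degree E w = \<Delta>"
    unfolding S_def \<Delta>_def by (rule out_pairs_degree_sum(2)[OF assms(1)])
qed

end

theorem mainTheorem9:
  fixes V :: "'a set" and E :: "'a \<Rightarrow> 'a \<Rightarrow> bool" and u v :: 'a
  assumes "simple_graph V E" and "E u v"
  defines "\<Delta> \<equiv> max_degree V E"
  shows "real (card (Fset E {u, v})) \<le>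
           real \<Delta> ^ 2 - 1 - real (card (tri_nbrs E {u, v})) / 2 - real (card (T1 E {u, v}))
           - real (card (T2 E {u, v})) / 2 - real (card (T6 E {u, v})) / 2
       \<and> (real (card (Fset E {u, v})) =
           real \<Delta> ^ 2 - 1 - real (card (tri_nbrs E {u, v})) / 2 - real (card (T1 E {u, v}))
           - real (card (T2 E {u, v})) / 2 - real (card (T6 E {u, v})) / 2
         \<longrightarrow> (\<forall>w \<in> nbhd E u \<union> nbhd E v. degree E w = \<Delta>))"
proof -
  interpret finite_simple_graph V E by unfold_locales (fact assms(1))
  define K where "K = 2 * card (Fset E {u, v}) + card (tri_nbrs E {u, v}) + 2 * card (T1 E {u, v})
    + card (T2 E {u, v}) + card (T6 E {u, v})"
  note bound = weighted_neighbour_count_bound[OF assms(2), folded \<Delta>_def K_def]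
  let ?F = "real (card (Fset E {u, v}))"
  let ?R = "real \<Delta> ^ 2 - 1 - real (card (tri_nbrs E {u, v})) / 2 - real (card (T1 E {u, v}))
    - real (card (T2 E {u, v})) / 2 - real (card (T6 E {u, v})) / 2"
  have R_eq: "?R = ?F + (real (2 * \<Delta>\<^sup>2) - real (K + 2)) / 2"
    unfolding K_def by (simp add: field_simps)
  have "real (K + 2) \<le> real (2 * \<Delta>\<^sup>2)" using bound(1) by (rule of_nat_mono)
  then have "?F \<le> ?R" unfolding R_eq by (simp add: field_simps)
  moreover have "real (K + 2) = real (2 * \<Delta>\<^sup>2)" if "?F = ?R"
    using that unfolding R_eq by simp
  ultimately show ?thesis using bound(2) of_nat_eq_iff by blast
qed

end
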